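(* Let $H$ be a $3$-graph with $s$ vertices, let $t\geq 1$, and let $G$ be a $3$-graph that is $H\sqcup S_{2,t}$-free. Let $v_1,v_2\in V(G)$ be distinct. If $G-\{v_1\}$ contains a copy of $H$ and $G-\{v_1,v_2\}$ contains no copy of $H$, then $\omega\big((G-\{v_2\})_{v_1}\big)\leq s+t-1$.
   Context: A $3$-graph $G$ is $F$-free if it contains no subgraph isomorphic to $F$. $S_{2,t}$ is the $3$-graph with vertex set $\{w_1,w_2,u_1,\dots,u_t\}$ and edge set $\{w_1w_2u_1,\dots,w_1w_2u_t\}$. $\sqcup$ denotes vertex-disjoint union. For $S\subseteq V(G)$, $G-S$ is the subgraph of $G$ induced by $V(G)\setminus S$. For a $3$-graph $G'$ and $v\in V(G')$, the link graph of $v$ is the $2$-graph $G'_v=\{ab: vab\in E(G')\}$, and $\omega(\cdot)$ denotes the order of a maximum clique of a $2$-graph. *)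

theory Defs
  imports Main
begin

definition is_3graph :: "'a set \<Rightarrow> 'a set set \<Rightarrow> bool" where
  "is_3graph V E \<longleftrightarrow> (\<forall>e\<in>E. e \<subseteq> V \<and> card e = 3)"

definition contains_copy :: "'b set \<Rightarrow> 'b set set \<Rightarrow> 'a set \<Rightarrow> 'a set set \<Rightarrow> bool" where
  "contains_copy VF EF VG EG \<longleftrightarrow>
     (\<exists>f. inj_on f VF \<and> f ` VF \<subseteq> VG \<and> (\<forall>e\<in>EF. f ` e \<in> EG))"

text \<open>S_{2,t}: vertices w1 = 0, w2 = 1, u_i = i+1 (1 \<le> i \<le> t).\<close>
definition S2_V :: "nat \<Rightarrow> nat set" where
  "S2_V t = {0..t+1}"
definition S2_E :: "nat \<Rightarrow> nat set set" where
  "S2_E t = {{0, 1, k} | k. k \<in> {2..t+1}}"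

definition dunion_V :: "'a set \<Rightarrow> 'b set \<Rightarrow> ('a + 'b) set" where
  "dunion_V V1 V2 = Inl ` V1 \<union> Inr ` V2"
definition dunion_E :: "'a set set \<Rightarrow> 'b set set \<Rightarrow> ('a + 'b) set set" where
  "dunion_E E1 E2 = (\<lambda>e. Inl ` e) ` E1 \<union> (\<lambda>e. Inr ` e) ` E2"

definition del_V :: "'a set \<Rightarrow> 'a set \<Rightarrow> 'a set" where
  "del_V V S = V - S"
definition del_E :: "'a set \<Rightarrow> 'a set set \<Rightarrow> 'a set \<Rightarrow> 'a set set" where
  "del_E V E S = {e \<in> E. e \<subseteq> V - S}"

definition link_V :: "'a set \<Rightarrow> 'a \<Rightarrow> 'a set" where
  "link_V V v = V - {v}"
definition link_E :: "'a set set \<Rightarrow> 'a \<Rightarrow> 'a set set" where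
  "link_E E v = {{a, b} | a b. {v, a, b} \<in> E \<and> a \<noteq> b \<and> a \<noteq> v \<and> b \<noteq> v}"

definition is_clique :: "'a set set \<Rightarrow> 'a set \<Rightarrow> bool" where
  "is_clique E K \<longleftrightarrow> (\<forall>a\<in>K. \<forall>b\<in>K. a \<noteq> b \<longrightarrow> {a, b} \<in> E)"
definition clique_number :: "'a set \<Rightarrow> 'a set set \<Rightarrow> nat" where
  "clique_number V E = Max {card K | K. K \<subseteq> V \<and> is_clique E K}"

end

theory Submission
  imports Defs
begin

text \<open>Fix a copy f of H in G - v1; since G - {v1, v2} has no copy of H, v2 lies in the
  image of f. A clique K in the link of v1 in G - v2 therefore meets the copy in at most
  s - 1 vertices. If |K| \<ge> s + t, then at least t + 1 vertices w, u1, ..., ut of K lie outside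
  the copy, and the edges v1 w ui form an S_{2,t} vertex-disjoint from it, a contradiction.\<close>

definition is_embedding ::
    "('b \<Rightarrow> 'a) \<Rightarrow> 'b set \<Rightarrow> 'b set set \<Rightarrow> 'a set \<Rightarrow> 'a set set \<Rightarrow> bool" where
  "is_embedding f VF EF VG EG \<longleftrightarrow> inj_on f VF \<and> f ` VF \<subseteq> VG \<and> (\<forall>e\<in>EF. f ` e \<in> EG)"

lemma contains_copy_iff_embedding:
  "contains_copy VF EF VG EG \<longleftrightarrow> (\<exists>f. is_embedding f VF EF VG EG)"
  unfolding contains_copy_def is_embedding_def ..

lemma embedding_del_iff:
  assumes "is_3graph VF EF"
  shows "is_embedding f VF EF (del_V VG S) (del_E VG EG S) \<longleftrightarrow>
    is_embedding f VF EF VG EG \<and> f ` VF \<inter> S = {}"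
  using assms unfolding is_embedding_def is_3graph_def del_V_def del_E_def by blast

lemma embedding_dunion:
  assumes f: "is_embedding f V1 E1 VG EG" and g: "is_embedding g V2 E2 VG EG"
    and disj: "f ` V1 \<inter> g ` V2 = {}"
  shows "is_embedding (case_sum f g) (dunion_V V1 V2) (dunion_E E1 E2) VG EG"
  unfolding is_embedding_def
proof (intro conjI)
  show "inj_on (case_sum f g) (dunion_V V1 V2)"
  proof (rule inj_onI)
    fix x y assume "x \<in> dunion_V V1 V2" "y \<in> dunion_V V1 V2" "case_sum f g x = case_sum f g y"
    then show "x = y"
      using f g disj unfolding dunion_V_def is_embedding_def
      by (elim UnE imageE) (auto dest: inj_onD)
  qed
  show "case_sum f g ` dunion_V V1 V2 \<subseteq> VG"
    using f g unfolding dunion_V_def is_embedding_def by (auto simp: image_Un image_image)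
  show "\<forall>e\<in>dunion_E E1 E2. case_sum f g ` e \<in> EG"
    using f g unfolding dunion_E_def is_embedding_def by (auto simp: image_image)
qed

lemma embedding_S2:
  assumes "w1 \<in> VG" "w2 \<in> VG" "w1 \<noteq> w2" "U \<subseteq> VG" "w1 \<notin> U" "w2 \<notin> U"
    and "finite U" "card U \<ge> t" and edges: "\<And>u. u \<in> U \<Longrightarrow> {w1, w2, u} \<in> EG"
  obtains g where "is_embedding g (S2_V t) (S2_E t) VG EG" "g ` S2_V t \<subseteq> {w1, w2} \<union> U"
proof -
  obtain h where h: "inj_on h {2..t+1}" "h ` {2..t+1} \<subseteq> U"
    using card_le_inj[of "{2..t+1}" U] assms(7,8) by auto
  define g where "g k = (if k = 0 then w1 else if k = 1 then w2 else h k)" for k :: nat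
  have S2_V_split: "S2_V t = {0, 1} \<union> {2..t+1}"
    unfolding S2_V_def by auto
  have g_low: "g ` {0, 1} = {w1, w2}"
    unfolding g_def by auto
  have g_high: "g ` {2..t+1} = h ` {2..t+1}"
    unfolding g_def by (intro image_cong) auto
  have "inj_on g {2..t+1}"
    using h(1) unfolding g_def by (rule inj_on_cong[THEN iffD1, rotated]) auto
  moreover have "inj_on g {0, 1}"
    using assms(3) unfolding g_def by simp
  moreover have "g ` {0, 1} \<inter> g ` {2..t+1} = {}"
    unfolding g_low g_high using h(2) assms(5,6) by blast
  ultimately have inj: "inj_on g (S2_V t)"
    unfolding S2_V_split inj_on_Un by blast
  have range: "g ` S2_V t \<subseteq> {w1, w2} \<union> U"
    using h(2) unfolding S2_V_split image_Un g_low g_high by blast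
  have "g ` e \<in> EG" if e: "e \<in> S2_E t" for e
  proof -
    obtain k where k: "k \<in> {2..t+1}" and "e = {0, 1, k}"
      using e unfolding S2_E_def by blast
    then have "g ` e = {w1, w2, h k}"
      unfolding g_def by auto
    moreover have "h k \<in> U"
      using k h(2) by blast
    ultimately show ?thesis
      using edges by simp
  qed
  moreover have "g ` S2_V t \<subseteq> VG"
    using range assms(1,2,4) by blast
  ultimately show ?thesis
    using that inj range unfolding is_embedding_def by blast
qed

lemma clique_link_edge:
  assumes "is_clique (link_E E v) K" "a \<in> K" "b \<in> K" "a \<noteq> b"
  shows "{v, a, b} \<in> E"
proof -
  obtain x y where "{a, b} = {x, y}" "{v, x, y} \<in> E"
    using assms unfolding is_clique_def link_E_def by blast
  then show ?thesis by (metis insert_commute)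
qed

lemma is_clique_mono: "E \<subseteq> E' \<Longrightarrow> K' \<subseteq> K \<Longrightarrow> is_clique E K \<Longrightarrow> is_clique E' K'"
  unfolding is_clique_def by blast

lemma link_E_mono: "E' \<subseteq> E \<Longrightarrow> link_E E' v \<subseteq> link_E E v"
  unfolding link_E_def by blast

lemma del_E_subset: "del_E V E S \<subseteq> E"
  unfolding del_E_def by blast

lemma link_clique_embeds_S2:
  assumes clique: "is_clique (link_E EG v) K" and "v \<in> VG" "K \<subseteq> VG - {v}" "finite K"
    and "card K \<ge> t + 1"
  obtains g where "is_embedding g (S2_V t) (S2_E t) VG EG" "g ` S2_V t \<subseteq> insert v K"
proof -
  obtain w where w: "w \<in> K"
    using assms(5) by fastforce
  have "card (K - {w}) \<ge> t"
    using assms(4,5) w by simp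
  moreover have "{v, w, u} \<in> EG" if "u \<in> K - {w}" for u
    using clique_link_edge[OF clique w] that by blast
  moreover have "w \<in> VG" "v \<noteq> w" "K - {w} \<subseteq> VG" "v \<notin> K - {w}"
    using assms(3) w by auto
  ultimately obtain g where "is_embedding g (S2_V t) (S2_E t) VG EG"
    "g ` S2_V t \<subseteq> {v, w} \<union> (K - {w})"
    using embedding_S2[of v VG w "K - {w}" t EG] assms(2,4) by blast
  moreover have "{v, w} \<union> (K - {w}) = insert v K"
    using w by blast
  ultimately show ?thesis
    using that by metis
qed

lemma card_Diff_ge:
  assumes "finite K" "finite X" "x \<in> X" "x \<notin> K" "card K \<ge> card X + t"
  shows "card (K - X) \<ge> t + 1"
proof -
  have "card (K \<inter> X) \<le> card (X - {x})"
    using assms(2-4) by (intro card_mono) auto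
  moreover have "card X > 0"
    using assms(2,3) card_gt_0_iff by blast
  ultimately show ?thesis
    using card_Int_Diff[OF assms(1), of X] assms(2,3,5) by (simp add: card_Diff_singleton)
qed

lemma clique_number_le:
  assumes "finite V" and "\<And>K. K \<subseteq> V \<Longrightarrow> is_clique E K \<Longrightarrow> card K \<le> n"
  shows "clique_number V E \<le> n"
proof -
  have "{card K | K. K \<subseteq> V \<and> is_clique E K} \<subseteq> card ` Pow V" by auto
  then have "finite {card K | K. K \<subseteq> V \<and> is_clique E K}"
    using assms(1) finite_subset by blast
  moreover have "is_clique E {}" unfolding is_clique_def by simp
  ultimately show ?thesis
    unfolding clique_number_def using assms(2) by (subst Max_le_iff) auto
qed

theorem claim3p6:
  fixes VH :: "'b set" and EH :: "'b set set"
    and VG :: "'a set" and EG :: "'a set set"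
    and s t :: nat and v1 v2 :: 'a
  assumes H: "is_3graph VH EH" "finite VH" "card VH = s"
    and t: "t \<ge> 1"
    and G: "is_3graph VG EG" "finite VG"
    and free: "\<not> contains_copy (dunion_V VH (S2_V t)) (dunion_E EH (S2_E t)) VG EG"
    and v: "v1 \<in> VG" "v2 \<in> VG" "v1 \<noteq> v2"
    and c1: "contains_copy VH EH (del_V VG {v1}) (del_E VG EG {v1})"
    and c2: "\<not> contains_copy VH EH (del_V VG {v1, v2}) (del_E VG EG {v1, v2})"
  shows "clique_number (link_V (del_V VG {v2}) v1) (link_E (del_E VG EG {v2}) v1) \<le> s + t - 1"
proof (rule clique_number_le)
  show "finite (link_V (del_V VG {v2}) v1)"
    using G(2) unfolding link_V_def del_V_def by simp
next
  obtain f where f: "is_embedding f VH EH VG EG" "v1 \<notin> f ` VH"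
    using c1 unfolding contains_copy_iff_embedding embedding_del_iff[OF H(1)] by blast
  then have v2f: "v2 \<in> f ` VH"
    using c2 unfolding contains_copy_iff_embedding embedding_del_iff[OF H(1)] by blast
  fix K assume K: "K \<subseteq> link_V (del_V VG {v2}) v1" "is_clique (link_E (del_E VG EG {v2}) v1) K"
  have KV: "K \<subseteq> VG - {v1} - {v2}" "finite K"
    using K(1) G(2) unfolding link_V_def del_V_def by (auto intro: finite_subset[of K VG])
  show "card K \<le> s + t - 1"
  proof (rule ccontr)
    assume "\<not> card K \<le> s + t - 1"
    then have "card (f ` VH) + t \<le> card K"
      using H(3) card_image_le[OF H(2), of f] by linarith
    then have large: "card (K - f ` VH) \<ge> t + 1"
      using card_Diff_ge[OF KV(2) finite_imageI[OF H(2)] v2f] KV(1) by blast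
    have clique: "is_clique (link_E EG v1) (K - f ` VH)"
      using K(2) by (rule is_clique_mono[OF link_E_mono[OF del_E_subset] Diff_subset])
    have "K - f ` VH \<subseteq> VG - {v1}" "finite (K - f ` VH)"
      using KV by auto
    then obtain g where g: "is_embedding g (S2_V t) (S2_E t) VG EG"
      "g ` S2_V t \<subseteq> insert v1 (K - f ` VH)"
      using link_clique_embeds_S2[OF clique v(1) _ _ large] by blast
    then have "f ` VH \<inter> g ` S2_V t = {}"
      using f(2) by blast
    then show False
      using free embedding_dunion[OF f(1) g(1)] unfolding contains_copy_iff_embedding by blast
  qed
qed

end
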